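(* For every $m=1,\dots,M$, every admissible policy $\Gamma$ and every fixed $\epsilon>0$, $$\mathbf P_m\Big(\max_{1\le t\le n}\Delta S_m(t)\ge n\big(I^*(M,K)+\epsilon\big)\,\Big|\,\Gamma\Big)\to0\quad\text{as }n\to\infty.$$
   Context: Model. Fix integers $M\ge2$, $1\le K\le M$. There are $M$ cells, exactly one containing a target; $H_m$: the target is in cell $m$. $f,g$ are probability densities w.r.t. a common measure with $0<D(g\|f),D(f\|g)<\infty$ ($D(p\|q)=\int p\log(p/q)$), and $\log(g(Y)/f(Y))$ has finite moment generating function near $0$ for $Y\sim f$ and $Y\sim g$. At each time $n$ a set $\phi(n)$ of $K$ distinct cells is selected (possibly randomized, depending on past selections and observations) and an observation $y_k(n)$ is obtained from each $k\in\phi(n)$; under $H_m$ observations are independent with law $g$ from cell $m$ and $f$ otherwise. $\mathbf P_m$: probability under $H_m$. Notation. $\ell_k(n)=\log\frac{g(y_k(n))}{f(y_k(n))}$, $\mathbf1_k(n)$ indicates cell $k$ is observed at time $n$, $S_k(n)=\sum_{t\le n}\ell_k(t)\mathbf1_k(t)$, $\Delta S_m(n)=\min_{j\ne m}(S_m(n)-S_j(n))$. $I^*(M,K)=D(g\|f)+D(f\|g)$ if $K=M$; $I^*(M,K)=\max\big[\frac{KD(f\|g)}{M-1},D(g\|f)+\frac{(K-1)D(f\|g)}{M-1}\big]$ if $K<M$. *)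

theory Defs
  imports "HOL-Probability.Probability"
begin

definition KLD :: "'a measure \<Rightarrow> ('a \<Rightarrow> real) \<Rightarrow> ('a \<Rightarrow> real) \<Rightarrow> real" where
  "KLD N p q = (\<integral>x. p x * ln (p x / q x) \<partial>N)"

definition LLR :: "('a \<Rightarrow> real) \<Rightarrow> ('a \<Rightarrow> real) \<Rightarrow> 'a \<Rightarrow> real" where
  "LLR f g y = ln (g y / f y)"

(* I*(M,K), with Dgf = D(g||f), Dfg = D(f||g) *)
definition Istar :: "nat \<Rightarrow> nat \<Rightarrow> real \<Rightarrow> real \<Rightarrow> real" where
  "Istar M K Dgf Dfg =
     (if K = M then Dgf + Dfg
      else max (real K * Dfg / (real M - 1)) (Dgf + (real K - 1) * Dfg / (real M - 1)))"

(* Cells are 0..M-1, times are 1,2,...  Y k t \<omega> is the observation that cell k would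
   produce at time t; it is seen only if k \<in> phi t \<omega>. *)

definition obs_hist ::
  "(nat \<Rightarrow> 'w \<Rightarrow> nat set) \<Rightarrow> (nat \<Rightarrow> nat \<Rightarrow> 'w \<Rightarrow> 'a) \<Rightarrow> nat \<Rightarrow> 'w \<Rightarrow> nat \<Rightarrow> nat \<Rightarrow> 'a option" where
  "obs_hist phi Y n \<omega> = (\<lambda>t k. if 1 \<le> t \<and> t < n \<and> k \<in> phi t \<omega> then Some (Y k t \<omega>) else None)"

definition past_sigma ::
  "nat \<Rightarrow> 'w measure \<Rightarrow> 'u measure \<Rightarrow> ('w \<Rightarrow> 'u) \<Rightarrow> 'a measure \<Rightarrow> (nat \<Rightarrow> nat \<Rightarrow> 'w \<Rightarrow> 'a)
    \<Rightarrow> nat \<Rightarrow> 'w measure" where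
  "past_sigma M P Ru U N Y n = sigma (space P)
     ({U -` A \<inter> space P | A. A \<in> sets Ru} \<union>
      {Y k t -` A \<inter> space P | A k t. A \<in> sets N \<and> k < M \<and> 1 \<le> t \<and> t < n})"

(* Probabilistic model under hypothesis H_m: independent samples, law g in cell m, f elsewhere,
   plus an independent randomisation variable U (for randomised policies). *)
definition search_model ::
  "nat \<Rightarrow> nat \<Rightarrow> 'w measure \<Rightarrow> 'a measure \<Rightarrow> ('a \<Rightarrow> real) \<Rightarrow> ('a \<Rightarrow> real) \<Rightarrow> 'u measure
    \<Rightarrow> ('w \<Rightarrow> 'u) \<Rightarrow> (nat \<Rightarrow> nat \<Rightarrow> 'w \<Rightarrow> 'a) \<Rightarrow> bool" where
  "search_model M m P N f g Ru U Y \<longleftrightarrow>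
     prob_space P \<and>
     U \<in> measurable P Ru \<and>
     (\<forall>k<M. \<forall>t\<ge>1. distributed P N (Y k t) (\<lambda>x. ennreal (if k = m then g x else f x))) \<and>
     prob_space.indep_sets P
       (\<lambda>i. case i of None \<Rightarrow> sets (vimage_algebra (space P) U Ru)
                    | Some (k, t) \<Rightarrow> sets (vimage_algebra (space P) (Y k t) N))
       (insert None (Some ` ({..<M} \<times> {1..})))"

definition admissible ::
  "nat \<Rightarrow> nat \<Rightarrow> 'w measure \<Rightarrow> 'u measure \<Rightarrow> ('w \<Rightarrow> 'u) \<Rightarrow> 'a measure \<Rightarrow> (nat \<Rightarrow> nat \<Rightarrow> 'w \<Rightarrow> 'a)
    \<Rightarrow> (nat \<Rightarrow> 'w \<Rightarrow> nat set) \<Rightarrow> bool" where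
  "admissible M K P Ru U N Y phi \<longleftrightarrow>
     (\<forall>n\<ge>1. \<forall>\<omega>\<in>space P. phi n \<omega> \<subseteq> {..<M} \<and> card (phi n \<omega>) = K) \<and>
     (\<exists>\<pi>. \<forall>n\<ge>1. \<forall>\<omega>\<in>space P. phi n \<omega> = \<pi> n (U \<omega>) (obs_hist phi Y n \<omega>)) \<and>
     (\<forall>n\<ge>1. phi n \<in> measurable (past_sigma M P Ru U N Y n) (count_space UNIV))"

definition cumS ::
  "('a \<Rightarrow> real) \<Rightarrow> ('a \<Rightarrow> real) \<Rightarrow> (nat \<Rightarrow> 'w \<Rightarrow> nat set) \<Rightarrow> (nat \<Rightarrow> nat \<Rightarrow> 'w \<Rightarrow> 'a)
    \<Rightarrow> nat \<Rightarrow> nat \<Rightarrow> 'w \<Rightarrow> real" where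
  "cumS f g phi Y k n \<omega> = (\<Sum>t\<in>{1..n}. if k \<in> phi t \<omega> then LLR f g (Y k t \<omega>) else 0)"

definition DeltaS ::
  "nat \<Rightarrow> ('a \<Rightarrow> real) \<Rightarrow> ('a \<Rightarrow> real) \<Rightarrow> (nat \<Rightarrow> 'w \<Rightarrow> nat set) \<Rightarrow> (nat \<Rightarrow> nat \<Rightarrow> 'w \<Rightarrow> 'a)
    \<Rightarrow> nat \<Rightarrow> nat \<Rightarrow> 'w \<Rightarrow> real" where
  "DeltaS M f g phi Y m n \<omega> =
     Min ((\<lambda>j. cumS f g phi Y m n \<omega> - cumS f g phi Y j n \<omega>) ` ({..<M} - {m}))"

end

theory Submission
  imports Defs
begin

text \<open>
  Weight the cumulative log-likelihood sums by \<open>w\<^sub>m = M - 1\<close> and \<open>w\<^sub>j = -1\<close> for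
  \<open>j \<noteq> m\<close>. The minimum of the \<open>M - 1\<close> gaps \<open>S\<^sub>m - S\<^sub>j\<close> is at most their average, so
  \<open>(M - 1) \<Delta>S\<^sub>m(t) \<le> \<Sum>\<^sub>k w\<^sub>k S\<^sub>k(t)\<close>. Splitting every observed log-likelihood ratio into
  its mean under \<open>H\<^sub>m\<close> and a centred fluctuation, the means contribute at most
  \<open>(M - 1) I*(M,K)\<close> per time step, whichever \<open>K\<close> cells are observed. Hence a gap of
  \<open>n (I* + \<epsilon>)\<close> before time \<open>n\<close> forces the weighted fluctuation of some cell to exceed
  \<open>n \<epsilon> / M\<close> at some time \<open>t \<le> n\<close>. The fluctuation of one cell is a sum of
  square-integrable increments orthogonal to the past (an observation is independent of
  everything the policy has seen before), so Kolmogorov's maximal inequality bounds that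
  probability by \<open>O(1/n)\<close>.
\<close>

text \<open>Martingale differences with bounded variance are the
  motivating example.\<close>
locale orthogonal_increments = prob_space P
  for P :: "'w measure" and F :: "nat \<Rightarrow> 'w measure" and D :: "nat \<Rightarrow> 'w \<Rightarrow> real" and C :: real +
  assumes past_subalgebra: "subalgebra P (F s)"
    and past_mono: "s \<le> s' \<Longrightarrow> subalgebra (F s') (F s)"
    and increment_adapted: "1 \<le> s \<Longrightarrow> D s \<in> borel_measurable (F (Suc s))"
    and increment_square: "1 \<le> s \<Longrightarrow>
      integrable P (\<lambda>\<omega>. (D s \<omega>)\<^sup>2) \<and> (\<integral>\<omega>. (D s \<omega>)\<^sup>2 \<partial>P) \<le> C"
    and increment_orthogonal: "1 \<le> s \<Longrightarrow> X \<in> borel_measurable (F s) \<Longrightarrow> integrable P X \<Longrightarrow>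
      integrable P (\<lambda>\<omega>. X \<omega> * D s \<omega>) \<and> (\<integral>\<omega>. X \<omega> * D s \<omega> \<partial>P) = 0"
begin

definition partial_sum :: "nat \<Rightarrow> 'w \<Rightarrow> real" where
  "partial_sum t \<omega> = (\<Sum>s\<in>{1..t}. D s \<omega>)"

lemma past_measurable_mono: "s \<le> s' \<Longrightarrow> X \<in> borel_measurable (F s) \<Longrightarrow> X \<in> borel_measurable (F s')"
  using measurable_from_subalg[OF past_mono] .

lemma partial_sum_adapted: "partial_sum t \<in> borel_measurable (F (Suc t))"
proof (induction t)
  case 0
  show ?case by (simp add: partial_sum_def)
next
  case (Suc t)
  have "partial_sum t \<in> borel_measurable (F (Suc (Suc t)))"
    using past_measurable_mono[OF _ Suc] by simp
  moreover have "D (Suc t) \<in> borel_measurable (F (Suc (Suc t)))"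
    using increment_adapted by simp
  moreover have "partial_sum (Suc t) = (\<lambda>\<omega>. partial_sum t \<omega> + D (Suc t) \<omega>)"
    by (simp add: partial_sum_def fun_eq_iff)
  ultimately show ?case by simp
qed

text \<open>Orthogonality to the constant 1 gives integrability of the increments.\<close>
lemma increment_integrable:
  assumes "1 \<le> s" shows "integrable P (D s)"
proof -
  have "(\<lambda>_. 1::real) \<in> borel_measurable (F s)" by simp
  then have "integrable P (\<lambda>\<omega>. 1 * D s \<omega>)"
    using increment_orthogonal[OF assms] by blast
  then show ?thesis by simp
qed

lemma partial_sum_integrable: "integrable P (partial_sum t)"
  unfolding partial_sum_def
  by (rule Bochner_Integration.integrable_sum) (simp add: increment_integrable)

lemma orthogonal_to_future:
  assumes "X \<in> borel_measurable (F (Suc t))" "integrable P X"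
  shows "integrable P (\<lambda>\<omega>. X \<omega> * (\<Sum>s\<in>{Suc t..n}. D s \<omega>)) \<and>
    (\<integral>\<omega>. X \<omega> * (\<Sum>s\<in>{Suc t..n}. D s \<omega>) \<partial>P) = 0"
proof -
  have each: "integrable P (\<lambda>\<omega>. X \<omega> * D s \<omega>) \<and> (\<integral>\<omega>. X \<omega> * D s \<omega> \<partial>P) = 0"
    if "s \<in> {Suc t..n}" for s
    using that by (intro increment_orthogonal past_measurable_mono[OF _ assms(1)] assms(2)) auto
  have "integrable P (\<lambda>\<omega>. \<Sum>s\<in>{Suc t..n}. X \<omega> * D s \<omega>)"
    by (rule Bochner_Integration.integrable_sum) (use each in blast)
  moreover have "(\<integral>\<omega>. (\<Sum>s\<in>{Suc t..n}. X \<omega> * D s \<omega>) \<partial>P) = 0"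
    by (subst Bochner_Integration.integral_sum) (use each in auto)
  ultimately show ?thesis
    by (simp add: sum_distrib_left)
qed

text \<open>Orthogonality kills the cross terms, so second moments add up.\<close>
lemma partial_sum_second_moment:
  "integrable P (\<lambda>\<omega>. (partial_sum t \<omega>)\<^sup>2) \<and> (\<integral>\<omega>. (partial_sum t \<omega>)\<^sup>2 \<partial>P) \<le> real t * C"
proof (induction t)
  case 0
  show ?case by (simp add: partial_sum_def)
next
  case (Suc t)
  let ?S = "partial_sum t" and ?d = "D (Suc t)"
  have expand: "(\<lambda>\<omega>. (partial_sum (Suc t) \<omega>)\<^sup>2) = (\<lambda>\<omega>. (?S \<omega>)\<^sup>2 + 2 * (?S \<omega> * ?d \<omega>) + (?d \<omega>)\<^sup>2)"
    by (auto simp: partial_sum_def power2_eq_square algebra_simps)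
  have cross: "integrable P (\<lambda>\<omega>. ?S \<omega> * ?d \<omega>) \<and> (\<integral>\<omega>. ?S \<omega> * ?d \<omega> \<partial>P) = 0"
    by (intro increment_orthogonal partial_sum_adapted partial_sum_integrable) simp
  have new: "integrable P (\<lambda>\<omega>. (?d \<omega>)\<^sup>2) \<and> (\<integral>\<omega>. (?d \<omega>)\<^sup>2 \<partial>P) \<le> C"
    by (intro increment_square) simp
  have "integrable P (\<lambda>\<omega>. (?S \<omega>)\<^sup>2 + 2 * (?S \<omega> * ?d \<omega>) + (?d \<omega>)\<^sup>2)"
    using Suc.IH cross new by simp
  moreover have "(\<integral>\<omega>. (?S \<omega>)\<^sup>2 + 2 * (?S \<omega> * ?d \<omega>) + (?d \<omega>)\<^sup>2 \<partial>P)
      = (\<integral>\<omega>. (?S \<omega>)\<^sup>2 \<partial>P) + (\<integral>\<omega>. (?d \<omega>)\<^sup>2 \<partial>P)"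
    using Suc.IH cross new by simp
  moreover have "(\<integral>\<omega>. (?S \<omega>)\<^sup>2 \<partial>P) + (\<integral>\<omega>. (?d \<omega>)\<^sup>2 \<partial>P) \<le> real (Suc t) * C"
    using Suc.IH new by (simp add: algebra_simps)
  ultimately show ?case
    unfolding expand by simp
qed

definition first_passage :: "real \<Rightarrow> nat \<Rightarrow> 'w set" where
  "first_passage lam t =
     {\<omega> \<in> space P. lam \<le> partial_sum t \<omega> \<and> (\<forall>s\<in>{1..<t}. partial_sum s \<omega> < lam)}"

lemma first_passage_sets: "first_passage lam t \<in> sets (F (Suc t))"
proof -
  have earlier: "partial_sum s \<in> borel_measurable (F (Suc t))" if "s \<le> t" for s
    using past_measurable_mono[OF _ partial_sum_adapted[of s]] that by simp
  have "space (F (Suc t)) = space P"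
    using past_subalgebra by (simp add: subalgebra_def)
  moreover have "{\<omega> \<in> space (F (Suc t)). lam \<le> partial_sum t \<omega> \<and> (\<forall>s\<in>{1..<t}. partial_sum s \<omega> < lam)}
      \<in> sets (F (Suc t))"
  proof (intro sets.sets_Collect_conj sets.sets_Collect_finite_All)
    have [measurable]: "partial_sum t \<in> borel_measurable (F (Suc t))" by (rule earlier) simp
    show "{\<omega> \<in> space (F (Suc t)). lam \<le> partial_sum t \<omega>} \<in> sets (F (Suc t))"
      by measurable
    fix s assume "s \<in> {1..<t}"
    then have [measurable]: "partial_sum s \<in> borel_measurable (F (Suc t))" by (intro earlier) simp
    show "{\<omega> \<in> space (F (Suc t)). partial_sum s \<omega> < lam} \<in> sets (F (Suc t))"
      by measurable
  qed simp
  ultimately show ?thesis by (simp add: first_passage_def)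
qed

lemma first_passage_events: "first_passage lam t \<in> events"
  using past_subalgebra[of "Suc t"] first_passage_sets[of lam t] unfolding subalgebra_def by blast

lemma first_passage_disjoint: "disjoint_family_on (first_passage lam) {1..}"
unfolding disjoint_family_on_def
proof (intro ballI impI)
  fix t t' :: nat assume "t \<in> {1..}" "t' \<in> {1..}" "t \<noteq> t'"
  then have "t \<in> {1..<t'} \<or> t' \<in> {1..<t}" by auto
  then show "first_passage lam t \<inter> first_passage lam t' = {}"
    by (force simp: first_passage_def)
qed

lemma crossing_has_first_passage:
  "{\<omega> \<in> space P. \<exists>t\<in>{1..n}. lam \<le> partial_sum t \<omega>} \<subseteq> (\<Union>t\<in>{1..n}. first_passage lam t)"
proof
  fix \<omega> assume "\<omega> \<in> {\<omega> \<in> space P. \<exists>t\<in>{1..n}. lam \<le> partial_sum t \<omega>}"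
  then have \<omega>: "\<omega> \<in> space P" and ex: "\<exists>t. t \<in> {1..n} \<and> lam \<le> partial_sum t \<omega>" by auto
  define t0 where "t0 = (LEAST t. t \<in> {1..n} \<and> lam \<le> partial_sum t \<omega>)"
  have t0: "t0 \<in> {1..n} \<and> lam \<le> partial_sum t0 \<omega>"
    unfolding t0_def by (rule LeastI_ex[OF ex])
  have "partial_sum s \<omega> < lam" if "s \<in> {1..<t0}" for s
    using not_less_Least[of s "\<lambda>t. t \<in> {1..n} \<and> lam \<le> partial_sum t \<omega>"] that t0
    unfolding t0_def by auto
  then show "\<omega> \<in> (\<Union>t\<in>{1..n}. first_passage lam t)"
    using t0 \<omega> by (auto simp: first_passage_def)
qed

lemma first_passage_pointwise:
  assumes lam: "0 < lam" and t: "t \<le> n"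
  shows "lam\<^sup>2 * indicator (first_passage lam t) \<omega>
      + 2 * (partial_sum t \<omega> * indicator (first_passage lam t) \<omega> * (\<Sum>s\<in>{Suc t..n}. D s \<omega>))
    \<le> (partial_sum n \<omega>)\<^sup>2 * indicator (first_passage lam t) \<omega>"
proof (cases "\<omega> \<in> first_passage lam t")
  case True
  let ?S = "partial_sum t \<omega>" and ?R = "\<Sum>s\<in>{Suc t..n}. D s \<omega>"
  have split: "partial_sum n \<omega> = ?S + ?R"
    using sum.ub_add_nat[of 1 t "\<lambda>s. D s \<omega>" "n - t"] t by (simp add: partial_sum_def)
  have "lam\<^sup>2 \<le> ?S\<^sup>2"
    using True lam by (intro power_mono) (auto simp: first_passage_def)
  moreover have "(?S + ?R)\<^sup>2 = ?S\<^sup>2 + 2 * (?S * ?R) + ?R\<^sup>2"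
    by (simp add: power2_eq_square algebra_simps)
  ultimately show ?thesis
    using True unfolding split by (simp add: add_increasing2)
qed simp

text \<open>The heart of Kolmogorov's argument: the later increments are orthogonal to \<open>S\<^sub>t\<close>
  restricted to the first-passage event, so the cross term vanishes in expectation.\<close>
lemma first_passage_second_moment:
  assumes lam: "0 < lam" and t: "t \<le> n"
  shows "lam\<^sup>2 * measure P (first_passage lam t)
    \<le> (\<integral>\<omega>. (partial_sum n \<omega>)\<^sup>2 * indicator (first_passage lam t) \<omega> \<partial>P)"
proof -
  let ?T = "first_passage lam t" and ?R = "\<lambda>\<omega>. \<Sum>s\<in>{Suc t..n}. D s \<omega>"
  let ?X = "\<lambda>\<omega>. partial_sum t \<omega> * indicator ?T \<omega>"
  have X_adapted: "?X \<in> borel_measurable (F (Suc t))"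
    using partial_sum_adapted[of t] first_passage_sets[of lam t] by measurable
  have X_integrable: "integrable P ?X"
    using first_passage_events partial_sum_integrable by (rule integrable_real_mult_indicator)
  have cross: "integrable P (\<lambda>\<omega>. ?X \<omega> * ?R \<omega>) \<and> (\<integral>\<omega>. ?X \<omega> * ?R \<omega> \<partial>P) = 0"
    using orthogonal_to_future[OF X_adapted X_integrable] .
  have T_integrable: "integrable P (indicator ?T :: 'w \<Rightarrow> real)"
    by (intro integrable_real_indicator first_passage_events) (simp add: less_top[symmetric])
  have final_integrable: "integrable P (\<lambda>\<omega>. (partial_sum n \<omega>)\<^sup>2 * indicator ?T \<omega>)"
    using first_passage_events partial_sum_second_moment[of n]
    by (intro integrable_real_mult_indicator) auto
  have "lam\<^sup>2 * measure P ?T = (\<integral>\<omega>. lam\<^sup>2 * indicator ?T \<omega> + 2 * (?X \<omega> * ?R \<omega>) \<partial>P)"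
    using first_passage_events T_integrable cross by simp
  also have "\<dots> \<le> (\<integral>\<omega>. (partial_sum n \<omega>)\<^sup>2 * indicator ?T \<omega> \<partial>P)"
    using T_integrable cross final_integrable first_passage_pointwise[OF lam t]
    by (intro integral_mono) (auto simp: mult.assoc)
  finally show ?thesis .
qed

theorem maximal_inequality:
  assumes lam: "0 < lam"
  shows "measure P {\<omega> \<in> space P. \<exists>t\<in>{1..n}. lam \<le> partial_sum t \<omega>} \<le> real n * C / lam\<^sup>2"
proof -
  let ?T = "first_passage lam" and ?Sn = "\<lambda>\<omega>. (partial_sum n \<omega>)\<^sup>2"
  have disjoint: "disjoint_family_on ?T {1..n}"
    by (rule disjoint_family_on_mono[OF _ first_passage_disjoint]) auto
  have Sn_integrable: "integrable P ?Sn" and Sn_moment: "(\<integral>\<omega>. ?Sn \<omega> \<partial>P) \<le> real n * C"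
    using partial_sum_second_moment by auto
  have "lam\<^sup>2 * measure P {\<omega> \<in> space P. \<exists>t\<in>{1..n}. lam \<le> partial_sum t \<omega>}
      \<le> lam\<^sup>2 * measure P (\<Union>t\<in>{1..n}. ?T t)"
    using crossing_has_first_passage first_passage_events
    by (intro mult_left_mono finite_measure_mono) auto
  also have "\<dots> = (\<Sum>t\<in>{1..n}. lam\<^sup>2 * measure P (?T t))"
    using first_passage_events disjoint
    by (subst finite_measure_finite_Union) (auto simp: sum_distrib_left)
  also have "\<dots> \<le> (\<Sum>t\<in>{1..n}. \<integral>\<omega>. ?Sn \<omega> * indicator (?T t) \<omega> \<partial>P)"
    using lam by (intro sum_mono first_passage_second_moment) auto
  also have "\<dots> = (\<integral>\<omega>. ?Sn \<omega> * indicator (\<Union>t\<in>{1..n}. ?T t) \<omega> \<partial>P)"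
    unfolding indicator_UN_disjoint[OF finite_atLeastAtMost disjoint] sum_distrib_left
    using Sn_integrable first_passage_events
    by (intro Bochner_Integration.integral_sum[symmetric] integrable_real_mult_indicator)
  also have "\<dots> \<le> (\<integral>\<omega>. ?Sn \<omega> \<partial>P)"
    using Sn_integrable first_passage_events
    by (intro integral_mono integrable_real_mult_indicator) (auto simp: indicator_def)
  finally show ?thesis
    using Sn_moment lam by (simp add: field_simps)
qed

end

lemma sigma_sets_preimages_subalgebra:
  assumes "subalgebra M Q" and "V \<in> measurable Q R"
  shows "sigma_sets (space M) {V -` A \<inter> space M | A. A \<in> sets R} \<subseteq> sets Q"
proof -
  have space: "space Q = space M"
    using assms(1) by (simp add: subalgebra_def)
  have "{V -` A \<inter> space M | A. A \<in> sets R} \<subseteq> sets Q"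
    using measurable_sets[OF assms(2)] unfolding space by blast
  then show ?thesis
    using sets.sigma_sets_subset[of _ Q] unfolding space by blast
qed

lemma (in prob_space) indep_var_of_subalgebras:
  assumes indep: "indep_set (sets G) (sets H)"
    and G: "subalgebra M G" and H: "subalgebra M H"
    and X: "X \<in> measurable G S" and Z: "Z \<in> measurable H T"
  shows "indep_var S X T Z"
proof -
  have rv: "random_variable S X" "random_variable T Z"
    using measurable_from_subalg[OF G X] measurable_from_subalg[OF H Z] .
  have "indep_set (sigma_sets (space M) {X -` A \<inter> space M | A. A \<in> sets S})
      (sigma_sets (space M) {Z -` A \<inter> space M | A. A \<in> sets T})"
    unfolding indep_set_def
    by (rule indep_sets_mono_sets[OF indep[unfolded indep_set_def]])
       (simp split: bool.split add: sigma_sets_preimages_subalgebra[OF G X]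
         sigma_sets_preimages_subalgebra[OF H Z])
  with rv show ?thesis
    unfolding indep_var_eq by blast
qed

definition past_generators ::
  "nat \<Rightarrow> 'w measure \<Rightarrow> 'u measure \<Rightarrow> ('w \<Rightarrow> 'u) \<Rightarrow> 'a measure \<Rightarrow> (nat \<Rightarrow> nat \<Rightarrow> 'w \<Rightarrow> 'a)
    \<Rightarrow> nat \<Rightarrow> 'w set set" where
  "past_generators M P Ru U N Y s = {U -` A \<inter> space P | A. A \<in> sets Ru} \<union>
     {Y k t -` A \<inter> space P | A k t. A \<in> sets N \<and> k < M \<and> 1 \<le> t \<and> t < s}"

lemma space_past_sigma [simp]: "space (past_sigma M P Ru U N Y s) = space P"
  unfolding past_sigma_def by (simp add: space_measure_of_conv)

lemma sets_past_sigma: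
  "sets (past_sigma M P Ru U N Y s) = sigma_sets (space P) (past_generators M P Ru U N Y s)"
  unfolding past_sigma_def past_generators_def by (rule sets_measure_of) auto

lemma past_sigma_mono:
  assumes "s \<le> s'"
  shows "subalgebra (past_sigma M P Ru U N Y s') (past_sigma M P Ru U N Y s)"
proof -
  have "past_generators M P Ru U N Y s \<subseteq> past_generators M P Ru U N Y s'"
    using assms unfolding past_generators_def by fastforce
  then show ?thesis
    unfolding subalgebra_def sets_past_sigma by (simp add: sigma_sets_subseteq)
qed

lemma past_sigma_subalgebra:
  assumes "U \<in> measurable P Ru" and "\<And>k t. k < M \<Longrightarrow> 1 \<le> t \<Longrightarrow> Y k t \<in> measurable P N"
  shows "subalgebra P (past_sigma M P Ru U N Y s)"
proof -
  have "past_generators M P Ru U N Y s \<subseteq> sets P"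
    using measurable_sets[OF assms(1)] measurable_sets[OF assms(2)]
    unfolding past_generators_def by blast
  then show ?thesis
    unfolding subalgebra_def sets_past_sigma by (simp add: sets.sigma_sets_subset)
qed

lemma observation_in_past:
  assumes "Y k t \<in> measurable P N" and "k < M" "1 \<le> t" "t < s"
  shows "Y k t \<in> measurable (past_sigma M P Ru U N Y s) N"
proof (rule measurableI)
  show "Y k t \<omega> \<in> space N" if "\<omega> \<in> space (past_sigma M P Ru U N Y s)" for \<omega>
    using that measurable_space[OF assms(1)] by simp
  show "Y k t -` A \<inter> space (past_sigma M P Ru U N Y s) \<in> sets (past_sigma M P Ru U N Y s)"
    if "A \<in> sets N" for A
    unfolding sets_past_sigma space_past_sigma using that assms(2-4)
    by (intro sigma_sets.Basic) (auto simp: past_generators_def)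
qed

lemma search_modelD:
  assumes "search_model M m P N f g Ru U Y"
  shows "prob_space P" and "U \<in> measurable P Ru"
    and "\<And>k t. k < M \<Longrightarrow> 1 \<le> t \<Longrightarrow>
      distributed P N (Y k t) (\<lambda>x. ennreal (if k = m then g x else f x))"
    and "\<And>k t. k < M \<Longrightarrow> 1 \<le> t \<Longrightarrow> Y k t \<in> measurable P N"
  using assms distributed_measurable unfolding search_model_def by blast+

lemma search_model_past_subalgebra:
  assumes "search_model M m P N f g Ru U Y"
  shows "subalgebra P (past_sigma M P Ru U N Y s)"
  using search_modelD(2,4)[OF assms] by (rule past_sigma_subalgebra)

text \<open>Under the search model the sample of cell \<open>k\<close> at time \<open>s\<close> is independent of the
  past before \<open>s\<close>: group the independent family of the model into the indices before \<open>s\<close>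
  and the single index \<open>(k, s)\<close>.\<close>
lemma past_independent_of_present:
  assumes SM: "search_model M m P N f g Ru U Y" and k: "k < M" and s: "1 \<le> s"
  shows "prob_space.indep_set P (sets (past_sigma M P Ru U N Y s))
           (sets (vimage_algebra (space P) (Y k s) N))"
proof -
  interpret prob_space P by (rule search_modelD(1)[OF SM])
  have U: "U \<in> measurable P Ru" and Y: "\<And>k t. k < M \<Longrightarrow> 1 \<le> t \<Longrightarrow> Y k t \<in> measurable P N"
    using search_modelD[OF SM] by blast+
  define E where "E i = (case i of None \<Rightarrow> sets (vimage_algebra (space P) U Ru)
                    | Some (k, t) \<Rightarrow> sets (vimage_algebra (space P) (Y k t) N))" for i
  define I where "I j = (if j then insert None (Some ` ({..<M} \<times> {1..<s})) else {Some (k, s)})" for j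
  have E_None: "E None = {U -` A \<inter> space P | A. A \<in> sets Ru}"
    using U by (simp add: E_def sets_vimage_algebra2 measurable_def)
  have E_Some: "E (Some (k', t)) = {Y k' t -` A \<inter> space P | A. A \<in> sets N}"
    if "k' < M" "1 \<le> t" for k' t
    using Y[OF that] by (simp add: E_def sets_vimage_algebra2 measurable_def)
  have "indep_sets E (insert None (Some ` ({..<M} \<times> {1..})))"
    using SM unfolding search_model_def E_def by blast
  then have indep: "indep_sets E (\<Union>j. I j)"
    by (rule indep_sets_mono_index[rotated]) (use k s in \<open>auto simp: I_def\<close>)
  have collected: "indep_sets (\<lambda>j. sigma_sets (space P) (\<Union>i\<in>I j. E i)) UNIV"
  proof (rule indep_sets_collect_sigma)
    show "indep_sets E (\<Union>j\<in>UNIV. I j)" using indep by simp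
    show "Int_stable (E i)" for i
      by (auto simp: E_def sets.Int_stable split: option.split)
    show "disjoint_family_on I UNIV"
      by (auto simp: disjoint_family_on_def I_def)
  qed
  have past: "(\<Union>i\<in>I True. E i) = past_generators M P Ru U N Y s"
    using E_None E_Some by (auto simp: I_def past_generators_def)
  have present: "sigma_sets (space P) (\<Union>i\<in>I False. E i) = sets (vimage_algebra (space P) (Y k s) N)"
    using sets.sigma_sets_eq[of "vimage_algebra (space P) (Y k s) N"] by (simp add: I_def E_def)
  have "(\<lambda>j. sigma_sets (space P) (\<Union>i\<in>I j. E i)) =
      case_bool (sets (past_sigma M P Ru U N Y s)) (sets (vimage_algebra (space P) (Y k s) N))"
    by (rule ext) (simp split: bool.split add: past present sets_past_sigma)
  with collected show ?thesis
    unfolding indep_set_def by simp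
qed

lemma subalgebra_vimage_algebra:
  assumes "Z \<in> measurable P N"
  shows "subalgebra P (vimage_algebra (space P) Z N)"
  using assms measurable_sets[OF assms]
  by (auto simp: subalgebra_def sets_vimage_algebra2 measurable_def)

lemma past_present_product:
  fixes X :: "'w \<Rightarrow> real" and \<phi> :: "'a \<Rightarrow> real"
  assumes SM: "search_model M m P N f g Ru U Y" and k: "k < M" and s: "1 \<le> s"
    and X: "X \<in> borel_measurable (past_sigma M P Ru U N Y s)" "integrable P X"
    and \<phi>: "\<phi> \<in> borel_measurable N" "integrable P (\<lambda>\<omega>. \<phi> (Y k s \<omega>))"
  shows "integrable P (\<lambda>\<omega>. X \<omega> * \<phi> (Y k s \<omega>)) \<and>
    (\<integral>\<omega>. X \<omega> * \<phi> (Y k s \<omega>) \<partial>P) = (\<integral>\<omega>. X \<omega> \<partial>P) * (\<integral>\<omega>. \<phi> (Y k s \<omega>) \<partial>P)"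
proof -
  interpret prob_space P by (rule search_modelD(1)[OF SM])
  have Y: "Y k s \<in> measurable P N"
    using search_modelD(4)[OF SM k s] .
  have "indep_var borel X borel (\<lambda>\<omega>. \<phi> (Y k s \<omega>))"
  proof (rule indep_var_of_subalgebras[OF past_independent_of_present[OF SM k s]])
    show "subalgebra P (past_sigma M P Ru U N Y s)"
      using SM by (rule search_model_past_subalgebra)
    show "subalgebra P (vimage_algebra (space P) (Y k s) N)"
      using Y by (rule subalgebra_vimage_algebra)
    show "(\<lambda>\<omega>. \<phi> (Y k s \<omega>)) \<in> borel_measurable (vimage_algebra (space P) (Y k s) N)"
      using measurable_vimage_algebra1[of "Y k s" "space P" N] measurable_space[OF Y] \<phi>(1)
      by (intro measurable_compose[where f="Y k s" and g=\<phi>]) auto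
  qed (rule X(1))
  then show ?thesis
    using indep_var_lebesgue_integral indep_var_integrable X(2) \<phi>(2) by blast
qed

text \<open>A two-sided exponential moment controls the second moment of the log-likelihood ratio.\<close>
lemma sq_le_exp_sum: "(x::real)\<^sup>2 \<le> 2 * (exp x + exp (- x))"
proof -
  have "1 + \<bar>x\<bar> + \<bar>x\<bar>\<^sup>2 / 2 \<le> exp \<bar>x\<bar>"
    by (rule exp_lower_Taylor_quadratic) simp
  moreover have "exp \<bar>x\<bar> \<le> exp x + exp (- x)"
    by (cases "0 \<le> x") (auto simp: add_pos_pos)
  ultimately show ?thesis by simp
qed

lemma llr_square_integrable:
  assumes D: "distributed P N Z (\<lambda>x. ennreal (h x))" and h: "\<And>x. 0 \<le> h x"
    and f: "f \<in> borel_measurable N" and g: "g \<in> borel_measurable N" and s0: "0 < s0"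
    and mgf_pos: "integrable N (\<lambda>x. h x * exp (s0 * LLR f g x))"
    and mgf_neg: "integrable N (\<lambda>x. h x * exp (- s0 * LLR f g x))"
  shows "integrable P (\<lambda>\<omega>. (LLR f g (Z \<omega>))\<^sup>2)"
proof -
  have [measurable]: "LLR f g \<in> borel_measurable N" "h \<in> borel_measurable N"
    using f g distributed_real_measurable[OF _ D] h unfolding LLR_def by measurable
  have bound: "h x * (LLR f g x)\<^sup>2
      \<le> 2 * (h x * exp (s0 * LLR f g x) + h x * exp (- s0 * LLR f g x)) / s0\<^sup>2" for x
  proof -
    have "s0\<^sup>2 * (LLR f g x)\<^sup>2 \<le> 2 * (exp (s0 * LLR f g x) + exp (- s0 * LLR f g x))"
      using sq_le_exp_sum[of "s0 * LLR f g x"] by (simp add: power_mult_distrib)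
    then have "(LLR f g x)\<^sup>2 \<le> 2 * (exp (s0 * LLR f g x) + exp (- s0 * LLR f g x)) / s0\<^sup>2"
      using s0 by (simp add: field_simps)
    from mult_left_mono[OF this h[of x]] show ?thesis
      by (simp add: algebra_simps add_divide_distrib)
  qed
  have "integrable N (\<lambda>x. h x * (LLR f g x)\<^sup>2)"
  proof (rule Bochner_Integration.integrable_bound)
    show "integrable N (\<lambda>x. 2 * (h x * exp (s0 * LLR f g x) + h x * exp (- s0 * LLR f g x)) / s0\<^sup>2)"
      using mgf_pos mgf_neg by simp
    show "AE x in N. norm (h x * (LLR f g x)\<^sup>2)
        \<le> norm (2 * (h x * exp (s0 * LLR f g x) + h x * exp (- s0 * LLR f g x)) / s0\<^sup>2)"
      using bound h by (intro AE_I2) (auto intro: order_trans[OF _ abs_ge_self])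
  qed measurable
  then show ?thesis
    using distributed_integrable[OF D, of "\<lambda>x. (LLR f g x)\<^sup>2"] h by simp
qed

lemma centred_llr_moments:
  fixes h :: "'a \<Rightarrow> real" and c :: real
  assumes P: "prob_space P" and law: "distributed P N Z (\<lambda>x. ennreal (h x))" and h: "\<And>x. 0 \<le> h x"
    and f: "f \<in> borel_measurable N" and g: "g \<in> borel_measurable N" and s0: "0 < s0"
    and mgf_pos: "integrable N (\<lambda>x. h x * exp (s0 * LLR f g x))"
    and mgf_neg: "integrable N (\<lambda>x. h x * exp (- s0 * LLR f g x))"
  defines "\<mu> \<equiv> \<integral>x. h x * LLR f g x \<partial>N"
  shows "integrable P (\<lambda>\<omega>. c * (LLR f g (Z \<omega>) - \<mu>)) \<and> (\<integral>\<omega>. c * (LLR f g (Z \<omega>) - \<mu>) \<partial>P) = 0"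
    and "integrable P (\<lambda>\<omega>. (c * (LLR f g (Z \<omega>) - \<mu>))\<^sup>2) \<and>
      (\<integral>\<omega>. (c * (LLR f g (Z \<omega>) - \<mu>))\<^sup>2 \<partial>P) = (\<integral>x. h x * (c * (LLR f g x - \<mu>))\<^sup>2 \<partial>N)"
proof -
  interpret prob_space P by (rule P)
  have [measurable]: "LLR f g \<in> borel_measurable N" "Z \<in> measurable P N"
    using f g distributed_measurable[OF law] unfolding LLR_def by measurable
  have law_integral: "(\<integral>\<omega>. \<psi> (Z \<omega>) \<partial>P) = (\<integral>x. h x * \<psi> x \<partial>N)" if "\<psi> \<in> borel_measurable N" for \<psi>
    using distributed_integral[OF law that] h by simp
  have square: "integrable P (\<lambda>\<omega>. (LLR f g (Z \<omega>))\<^sup>2)"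
    using llr_square_integrable[OF law h f g s0 mgf_pos mgf_neg] .
  have first: "integrable P (\<lambda>\<omega>. LLR f g (Z \<omega>))"
    by (intro square_integrable_imp_integrable[OF _ square]) measurable
  show "integrable P (\<lambda>\<omega>. c * (LLR f g (Z \<omega>) - \<mu>)) \<and> (\<integral>\<omega>. c * (LLR f g (Z \<omega>) - \<mu>) \<partial>P) = 0"
    using first law_integral[of "LLR f g"] by (simp add: \<mu>_def prob_space)
  have "(\<lambda>\<omega>. (c * (LLR f g (Z \<omega>) - \<mu>))\<^sup>2)
      = (\<lambda>\<omega>. c\<^sup>2 * (LLR f g (Z \<omega>))\<^sup>2 - 2 * c\<^sup>2 * \<mu> * LLR f g (Z \<omega>) + c\<^sup>2 * \<mu>\<^sup>2)"
    by (simp add: fun_eq_iff power2_eq_square algebra_simps)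
  then have "integrable P (\<lambda>\<omega>. (c * (LLR f g (Z \<omega>) - \<mu>))\<^sup>2)"
    using first square by simp
  moreover have "(\<integral>\<omega>. (c * (LLR f g (Z \<omega>) - \<mu>))\<^sup>2 \<partial>P) = (\<integral>x. h x * (c * (LLR f g x - \<mu>))\<^sup>2 \<partial>N)"
    by (rule law_integral) measurable
  ultimately show "integrable P (\<lambda>\<omega>. (c * (LLR f g (Z \<omega>) - \<mu>))\<^sup>2) \<and>
      (\<integral>\<omega>. (c * (LLR f g (Z \<omega>) - \<mu>))\<^sup>2 \<partial>P) = (\<integral>x. h x * (c * (LLR f g x - \<mu>))\<^sup>2 \<partial>N)"
    by blast
qed

lemma selection_adapted:
  assumes "admissible M K P Ru U N Y phi" and "1 \<le> s"
  shows "(\<lambda>\<omega>. if k \<in> phi s \<omega> then 1 else 0 :: real) \<in> borel_measurable (past_sigma M P Ru U N Y s)"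
proof -
  have "phi s \<in> measurable (past_sigma M P Ru U N Y s) (count_space UNIV)"
    using assms unfolding admissible_def by blast
  from measurable_compose[OF this, of "\<lambda>S. if k \<in> S then 1 else 0 :: real" borel]
  show ?thesis by simp
qed

lemma selected_square_bound:
  fixes b Z :: "'w \<Rightarrow> real"
  assumes b: "b \<in> borel_measurable P" "\<And>\<omega>. b \<omega> = 0 \<or> b \<omega> = 1" and Z: "Z \<in> borel_measurable P"
    and square: "integrable P (\<lambda>\<omega>. (Z \<omega>)\<^sup>2) \<and> (\<integral>\<omega>. (Z \<omega>)\<^sup>2 \<partial>P) \<le> C"
  shows "integrable P (\<lambda>\<omega>. (b \<omega> * Z \<omega>)\<^sup>2) \<and> (\<integral>\<omega>. (b \<omega> * Z \<omega>)\<^sup>2 \<partial>P) \<le> C"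
proof
  have dominated: "(b \<omega> * Z \<omega>)\<^sup>2 \<le> (Z \<omega>)\<^sup>2" for \<omega>
    using b(2)[of \<omega>] by auto
  show integrable: "integrable P (\<lambda>\<omega>. (b \<omega> * Z \<omega>)\<^sup>2)"
  proof (rule Bochner_Integration.integrable_bound)
    show "integrable P (\<lambda>\<omega>. (Z \<omega>)\<^sup>2)"
      using square by blast
    show "AE \<omega> in P. norm ((b \<omega> * Z \<omega>)\<^sup>2) \<le> norm ((Z \<omega>)\<^sup>2)"
      using dominated by (intro AE_I2) simp
  qed (use b(1) Z in measurable)
  have "(\<integral>\<omega>. (b \<omega> * Z \<omega>)\<^sup>2 \<partial>P) \<le> (\<integral>\<omega>. (Z \<omega>)\<^sup>2 \<partial>P)"
    using integrable square dominated by (intro integral_mono) blast+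
  then show "(\<integral>\<omega>. (b \<omega> * Z \<omega>)\<^sup>2 \<partial>P) \<le> C"
    using square by linarith
qed

text \<open>A centred function of the sample of cell \<open>k\<close> at time \<open>s\<close>, restricted to the event that
  the policy observes cell \<open>k\<close> then, is orthogonal to the past before \<open>s\<close>: the selection is
  decided by that past and the sample is independent of it.\<close>
lemma selected_observation_orthogonal:
  fixes \<phi> :: "'a \<Rightarrow> real" and X :: "'w \<Rightarrow> real"
  assumes SM: "search_model M m P N f g Ru U Y" and adm: "admissible M K P Ru U N Y phi"
    and k: "k < M" and s: "1 \<le> s" and \<phi>: "\<phi> \<in> borel_measurable N"
    and centred: "integrable P (\<lambda>\<omega>. \<phi> (Y k s \<omega>)) \<and> (\<integral>\<omega>. \<phi> (Y k s \<omega>) \<partial>P) = 0"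
    and X: "X \<in> borel_measurable (past_sigma M P Ru U N Y s)" "integrable P X"
  shows "integrable P (\<lambda>\<omega>. X \<omega> * (if k \<in> phi s \<omega> then \<phi> (Y k s \<omega>) else 0)) \<and>
    (\<integral>\<omega>. X \<omega> * (if k \<in> phi s \<omega> then \<phi> (Y k s \<omega>) else 0) \<partial>P) = 0"
proof -
  let ?sel = "\<lambda>\<omega>. if k \<in> phi s \<omega> then 1 else 0 :: real"
  have Xsel_adapted: "(\<lambda>\<omega>. X \<omega> * ?sel \<omega>) \<in> borel_measurable (past_sigma M P Ru U N Y s)"
    using X(1) selection_adapted[OF adm s] by measurable
  have Xsel_integrable: "integrable P (\<lambda>\<omega>. X \<omega> * ?sel \<omega>)"
    using measurable_from_subalg[OF search_model_past_subalgebra[OF SM] Xsel_adapted]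
    by (intro Bochner_Integration.integrable_bound[OF X(2)]) auto
  have "(\<lambda>\<omega>. X \<omega> * (if k \<in> phi s \<omega> then \<phi> (Y k s \<omega>) else 0)) = (\<lambda>\<omega>. X \<omega> * ?sel \<omega> * \<phi> (Y k s \<omega>))"
    by (simp add: fun_eq_iff)
  with past_present_product[OF SM k s Xsel_adapted Xsel_integrable \<phi>] centred
  show ?thesis by simp
qed

lemma selected_observations_orthogonal:
  fixes \<phi> :: "'a \<Rightarrow> real"
  assumes SM: "search_model M m P N f g Ru U Y" and adm: "admissible M K P Ru U N Y phi"
    and k: "k < M" and \<phi>: "\<phi> \<in> borel_measurable N"
    and centred: "\<And>s. 1 \<le> s \<Longrightarrow> integrable P (\<lambda>\<omega>. \<phi> (Y k s \<omega>)) \<and> (\<integral>\<omega>. \<phi> (Y k s \<omega>) \<partial>P) = 0"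
    and square: "\<And>s. 1 \<le> s \<Longrightarrow>
      integrable P (\<lambda>\<omega>. (\<phi> (Y k s \<omega>))\<^sup>2) \<and> (\<integral>\<omega>. (\<phi> (Y k s \<omega>))\<^sup>2 \<partial>P) \<le> C"
  shows "orthogonal_increments P (past_sigma M P Ru U N Y)
    (\<lambda>s \<omega>. if k \<in> phi s \<omega> then \<phi> (Y k s \<omega>) else 0) C"
proof -
  interpret prob_space P by (rule search_modelD(1)[OF SM])
  let ?F = "past_sigma M P Ru U N Y" and ?sel = "\<lambda>s \<omega>. if k \<in> phi s \<omega> then 1 else 0 :: real"
  have increment: "(if k \<in> phi s \<omega> then \<phi> (Y k s \<omega>) else 0) = ?sel s \<omega> * \<phi> (Y k s \<omega>)" for s \<omega>
    by simp
  have Y: "Y k s \<in> measurable P N" if "1 \<le> s" for s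
    using search_modelD(4)[OF SM k that] .
  have sel_later: "?sel s \<in> borel_measurable (?F s')" if "1 \<le> s" "s \<le> s'" for s s'
    using measurable_from_subalg[OF past_sigma_mono[OF that(2)] selection_adapted[OF adm that(1)]] .
  show ?thesis
  proof unfold_locales
    show "subalgebra P (?F s)" for s
      using SM by (rule search_model_past_subalgebra)
    show "subalgebra (?F s') (?F s)" if "s \<le> s'" for s s'
      using that by (rule past_sigma_mono)
    show "(\<lambda>\<omega>. if k \<in> phi s \<omega> then \<phi> (Y k s \<omega>) else 0) \<in> borel_measurable (?F (Suc s))" if s: "1 \<le> s" for s
      using observation_in_past[where Y = Y and k = k and t = s and s = "Suc s", OF Y[OF s] k s lessI]
        sel_later[OF s] \<phi>
      unfolding increment by measurable
    show "integrable P (\<lambda>\<omega>. (if k \<in> phi s \<omega> then \<phi> (Y k s \<omega>) else 0)\<^sup>2) \<and>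
        (\<integral>\<omega>. (if k \<in> phi s \<omega> then \<phi> (Y k s \<omega>) else 0)\<^sup>2 \<partial>P) \<le> C" if s: "1 \<le> s" for s
    proof -
      have sel: "?sel s \<in> borel_measurable P"
        using measurable_from_subalg[OF search_model_past_subalgebra[OF SM] sel_later[OF s order_refl]] .
      have "(\<lambda>\<omega>. \<phi> (Y k s \<omega>)) \<in> borel_measurable P"
        using Y[OF s] \<phi> by measurable
      then show ?thesis
        unfolding increment by (intro selected_square_bound[OF sel _ _ square[OF s]]) simp
    qed
    show "integrable P (\<lambda>\<omega>. X \<omega> * (if k \<in> phi s \<omega> then \<phi> (Y k s \<omega>) else 0)) \<and>
        (\<integral>\<omega>. X \<omega> * (if k \<in> phi s \<omega> then \<phi> (Y k s \<omega>) else 0) \<partial>P) = 0"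
      if "1 \<le> s" "X \<in> borel_measurable (?F s)" "integrable P X" for s X
      using selected_observation_orthogonal[OF SM adm k that(1) \<phi> centred[OF that(1)] that(2,3)] .
  qed
qed

lemma cell_maximal_inequality:
  fixes h :: "'a \<Rightarrow> real" and c lam :: real
  assumes SM: "search_model M m P N f g Ru U Y" and adm: "admissible M K P Ru U N Y phi"
    and k: "k < M"
    and law: "\<And>t. 1 \<le> t \<Longrightarrow> distributed P N (Y k t) (\<lambda>x. ennreal (h x))"
    and h: "\<And>x. 0 \<le> h x" and f: "f \<in> borel_measurable N" and g: "g \<in> borel_measurable N"
    and s0: "0 < s0"
    and mgf_pos: "integrable N (\<lambda>x. h x * exp (s0 * LLR f g x))"
    and mgf_neg: "integrable N (\<lambda>x. h x * exp (- s0 * LLR f g x))"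
    and lam: "0 < lam"
  defines "\<mu> \<equiv> \<integral>x. h x * LLR f g x \<partial>N"
  shows "measure P {\<omega> \<in> space P. \<exists>t\<in>{1..n}.
      lam \<le> (\<Sum>s\<in>{1..t}. if k \<in> phi s \<omega> then c * (LLR f g (Y k s \<omega>) - \<mu>) else 0)}
    \<le> real n * (\<integral>x. h x * (c * (LLR f g x - \<mu>))\<^sup>2 \<partial>N) / lam\<^sup>2"
proof -
  note moments = centred_llr_moments[OF search_modelD(1)[OF SM] law h f g s0 mgf_pos mgf_neg,
      folded \<mu>_def, of _ c]
  have "(\<lambda>x. c * (LLR f g x - \<mu>)) \<in> borel_measurable N"
    using f g unfolding LLR_def by measurable
  from selected_observations_orthogonal[OF SM adm k this moments(1)]
  interpret cell: orthogonal_increments P "past_sigma M P Ru U N Y"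
    "\<lambda>s \<omega>. if k \<in> phi s \<omega> then c * (LLR f g (Y k s \<omega>) - \<mu>) else 0"
    "\<integral>x. h x * (c * (LLR f g x - \<mu>))\<^sup>2 \<partial>N"
    using moments(2) by simp
  show ?thesis
    using cell.maximal_inequality[OF lam, of n] unfolding cell.partial_sum_def .
qed

text \<open>The weights \<open>w\<^sub>m = M - 1\<close> and \<open>w\<^sub>j = -1\<close> for \<open>j \<noteq> m\<close>, chosen so that
  \<open>\<Sum>\<^sub>k w\<^sub>k S\<^sub>k = \<Sum>\<^sub>j\<^sub>\<noteq>\<^sub>m (S\<^sub>m - S\<^sub>j)\<close>.\<close>
definition gap_weight :: "nat \<Rightarrow> nat \<Rightarrow> nat \<Rightarrow> real" where
  "gap_weight M m k = (if k = m then real M - 1 else -1)"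

text \<open>The smallest of the \<open>M - 1\<close> gaps is at most their average.\<close>
lemma min_gap_le_weighted_sum:
  fixes S :: "nat \<Rightarrow> real"
  assumes "2 \<le> M" and "m < M"
  shows "(real M - 1) * Min ((\<lambda>j. S m - S j) ` ({..<M} - {m})) \<le> (\<Sum>k<M. gap_weight M m k * S k)"
proof -
  let ?J = "{..<M} - {m}"
  have card_J: "real (card ?J) = real M - 1"
    using assms by (simp add: of_nat_diff)
  have "real (card ?J) * Min ((\<lambda>j. S m - S j) ` ?J) \<le> (\<Sum>j\<in>?J. S m - S j)"
    by (rule sum_bounded_below) simp
  also have "\<dots> = (real M - 1) * S m - (\<Sum>j\<in>?J. S j)"
    using card_J by (simp add: sum_subtractf)
  also have "\<dots> = (\<Sum>k<M. gap_weight M m k * S k)"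
    using assms by (simp add: sum.remove[of "{..<M}" m] gap_weight_def sum_negf[symmetric])
  finally show ?thesis
    using card_J by simp
qed

text \<open>Per time step, the mean increment of the weighted statistic is \<open>(M - 1) D(g\<parallel>f)\<close> for
  the target cell and \<open>D(f\<parallel>g)\<close> for every other observed cell; for any choice of \<open>K\<close> cells
  the total is at most \<open>(M - 1) I*(M,K)\<close>.\<close>
lemma selection_drift_le:
  fixes Dgf Dfg :: real and \<Phi> :: "nat set"
  assumes "2 \<le> M" and "m < M" and \<Phi>: "\<Phi> \<subseteq> {..<M}" "card \<Phi> = K"
  shows "(\<Sum>k\<in>\<Phi>. if k = m then (real M - 1) * Dgf else Dfg) \<le> (real M - 1) * Istar M K Dgf Dfg"
proof -
  have fin: "finite \<Phi>"
    using \<Phi>(1) finite_subset by blast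
  have M1: "0 < real M - 1"
    using assms by simp
  show ?thesis
  proof (cases "m \<in> \<Phi>")
    case True
    have "1 \<le> K"
      using True fin \<Phi>(2) by (cases "K = 0") auto
    have "(\<Sum>k\<in>\<Phi>. if k = m then (real M - 1) * Dgf else Dfg) = (real M - 1) * Dgf + (real K - 1) * Dfg"
      using True fin \<Phi>(2) \<open>1 \<le> K\<close> by (simp add: sum.remove[of \<Phi> m] of_nat_diff)
    also have "\<dots> = (real M - 1) * (Dgf + (real K - 1) * Dfg / (real M - 1))"
      using M1 by (simp add: field_simps)
    also have "\<dots> \<le> (real M - 1) * Istar M K Dgf Dfg"
    proof (rule mult_left_mono)
      show "Dgf + (real K - 1) * Dfg / (real M - 1) \<le> Istar M K Dgf Dfg"
        using M1 by (cases "K = M") (auto simp: Istar_def)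
    qed (use M1 in simp)
    finally show ?thesis .
  next
    case False
    have "K \<noteq> M"
    proof
      assume "K = M"
      then have "\<Phi> = {..<M}" using \<Phi> by (intro card_subset_eq) auto
      then show False using False assms by auto
    qed
    have "(\<Sum>k\<in>\<Phi>. if k = m then (real M - 1) * Dgf else Dfg) = real K * Dfg"
      using False \<Phi>(2) by (subst sum.cong[OF refl, of _ _ "\<lambda>_. Dfg"]) auto
    also have "\<dots> = (real M - 1) * (real K * Dfg / (real M - 1))"
      using M1 by (simp add: field_simps)
    also have "\<dots> \<le> (real M - 1) * Istar M K Dgf Dfg"
      using \<open>K \<noteq> M\<close> M1 by (intro mult_left_mono) (auto simp: Istar_def)
    finally show ?thesis .
  qed
qed

lemma weighted_gap_bound:
  fixes L :: "nat \<Rightarrow> nat \<Rightarrow> real" and \<Phi> :: "nat \<Rightarrow> nat set" and \<mu> :: "nat \<Rightarrow> real"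
  assumes M: "2 \<le> M" "m < M"
    and \<Phi>: "\<And>s. s \<in> {1..t} \<Longrightarrow> \<Phi> s \<subseteq> {..<M} \<and> card (\<Phi> s) = K"
    and \<mu>_target: "\<mu> m = Dgf" and \<mu>_other: "\<And>j. j \<noteq> m \<Longrightarrow> \<mu> j = - Dfg"
  defines "S k \<equiv> \<Sum>s\<in>{1..t}. if k \<in> \<Phi> s then L k s else 0"
  shows "(real M - 1) * Min ((\<lambda>j. S m - S j) ` ({..<M} - {m}))
    \<le> real t * ((real M - 1) * Istar M K Dgf Dfg)
      + (\<Sum>k<M. \<Sum>s\<in>{1..t}. if k \<in> \<Phi> s then gap_weight M m k * (L k s - \<mu> k) else 0)"
proof -
  let ?w = "gap_weight M m" and ?I = "Istar M K Dgf Dfg"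
  let ?drift = "\<lambda>s k. if k \<in> \<Phi> s then ?w k * \<mu> k else 0"
    and ?noise = "\<lambda>s k. if k \<in> \<Phi> s then ?w k * (L k s - \<mu> k) else 0"
  have step_drift: "(\<Sum>k<M. ?drift s k) \<le> (real M - 1) * ?I" if s: "s \<in> {1..t}" for s
  proof -
    have "(\<Sum>k<M. ?drift s k) = (\<Sum>k\<in>\<Phi> s. ?w k * \<mu> k)"
      using \<Phi>[OF s] by (simp add: sum.inter_restrict[symmetric] Int_absorb1)
    also have "\<dots> = (\<Sum>k\<in>\<Phi> s. if k = m then (real M - 1) * Dgf else Dfg)"
      by (intro sum.cong) (auto simp: gap_weight_def \<mu>_target \<mu>_other)
    also have "\<dots> \<le> (real M - 1) * ?I"
      using \<Phi>[OF s] M by (intro selection_drift_le) auto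
    finally show ?thesis .
  qed
  have "(real M - 1) * Min ((\<lambda>j. S m - S j) ` ({..<M} - {m})) \<le> (\<Sum>k<M. ?w k * S k)"
    using M by (rule min_gap_le_weighted_sum)
  also have "\<dots> = (\<Sum>k<M. \<Sum>s\<in>{1..t}. ?drift s k + ?noise s k)"
    unfolding S_def sum_distrib_left by (intro sum.cong refl) (simp add: algebra_simps)
  also have "\<dots> = (\<Sum>s\<in>{1..t}. \<Sum>k<M. ?drift s k) + (\<Sum>k<M. \<Sum>s\<in>{1..t}. ?noise s k)"
    by (simp add: sum.distrib sum.swap[of _ "{..<M}"])
  also have "(\<Sum>s\<in>{1..t}. \<Sum>k<M. ?drift s k) \<le> real t * ((real M - 1) * ?I)"
    using sum_mono[of "{1..t}", OF step_drift] by simp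
  finally show ?thesis by simp
qed

definition cell_density :: "nat \<Rightarrow> ('a \<Rightarrow> real) \<Rightarrow> ('a \<Rightarrow> real) \<Rightarrow> nat \<Rightarrow> 'a \<Rightarrow> real" where
  "cell_density m f g k = (if k = m then g else f)"

definition llr_mean :: "'a measure \<Rightarrow> ('a \<Rightarrow> real) \<Rightarrow> ('a \<Rightarrow> real) \<Rightarrow> nat \<Rightarrow> nat \<Rightarrow> real" where
  "llr_mean N f g m k = (\<integral>x. cell_density m f g k x * LLR f g x \<partial>N)"

definition fluctuation ::
  "nat \<Rightarrow> 'a measure \<Rightarrow> ('a \<Rightarrow> real) \<Rightarrow> ('a \<Rightarrow> real) \<Rightarrow> (nat \<Rightarrow> 'w \<Rightarrow> nat set)
    \<Rightarrow> (nat \<Rightarrow> nat \<Rightarrow> 'w \<Rightarrow> 'a) \<Rightarrow> nat \<Rightarrow> nat \<Rightarrow> nat \<Rightarrow> 'w \<Rightarrow> real" where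
  "fluctuation M N f g phi Y m k t \<omega> = (\<Sum>s\<in>{1..t}. if k \<in> phi s \<omega>
     then gap_weight M m k * (LLR f g (Y k s \<omega>) - llr_mean N f g m k) else 0)"

definition fluctuation_variance ::
  "nat \<Rightarrow> 'a measure \<Rightarrow> ('a \<Rightarrow> real) \<Rightarrow> ('a \<Rightarrow> real) \<Rightarrow> nat \<Rightarrow> nat \<Rightarrow> real" where
  "fluctuation_variance M N f g m k =
     (\<integral>x. cell_density m f g k x * (gap_weight M m k * (LLR f g x - llr_mean N f g m k))\<^sup>2 \<partial>N)"

lemma llr_mean_target: "llr_mean N f g m m = KLD N g f"
  by (simp add: llr_mean_def cell_density_def KLD_def LLR_def)

lemma llr_mean_other:
  assumes "k \<noteq> m" and "\<And>x. 0 \<le> f x" and "\<And>x. 0 \<le> g x"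
  shows "llr_mean N f g m k = - KLD N f g"
proof -
  have "ln (g x / f x) = - ln (f x / g x)" for x
    using assms(2,3)[of x] by (cases "f x = 0"; cases "g x = 0") (auto simp: ln_div)
  then show ?thesis
    using assms(1) by (simp add: llr_mean_def cell_density_def KLD_def LLR_def)
qed

lemma Istar_nonneg:
  assumes "2 \<le> M" and "0 \<le> Dgf" and "0 \<le> Dfg"
  shows "0 \<le> Istar M K Dgf Dfg"
  using assms by (auto simp: Istar_def intro: max.coboundedI1)

lemma gap_le_drift_plus_fluctuation:
  assumes M: "2 \<le> M" "m < M" and adm: "admissible M K P Ru U N Y phi" and \<omega>: "\<omega> \<in> space P"
    and f: "\<And>x. 0 \<le> f x" and g: "\<And>x. 0 \<le> g x"
  shows "(real M - 1) * DeltaS M f g phi Y m t \<omega>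
    \<le> real t * ((real M - 1) * Istar M K (KLD N g f) (KLD N f g))
      + (\<Sum>k<M. fluctuation M N f g phi Y m k t \<omega>)"
proof -
  have "phi s \<omega> \<subseteq> {..<M} \<and> card (phi s \<omega>) = K" if "s \<in> {1..t}" for s
    using adm \<omega> that unfolding admissible_def by auto
  then have "(real M - 1) * Min ((\<lambda>j. cumS f g phi Y m t \<omega> - cumS f g phi Y j t \<omega>) ` ({..<M} - {m}))
    \<le> real t * ((real M - 1) * Istar M K (KLD N g f) (KLD N f g))
      + (\<Sum>k<M. \<Sum>s\<in>{1..t}. if k \<in> phi s \<omega>
          then gap_weight M m k * (LLR f g (Y k s \<omega>) - llr_mean N f g m k) else 0)"
    unfolding cumS_def
    by (intro weighted_gap_bound[OF M]) (auto simp: llr_mean_target llr_mean_other[OF _ f g])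
  then show ?thesis
    unfolding DeltaS_def fluctuation_def .
qed

lemma fluctuation_measurable:
  assumes SM: "search_model M m P N f g Ru U Y" and adm: "admissible M K P Ru U N Y phi"
    and k: "k < M" and f: "f \<in> borel_measurable N" and g: "g \<in> borel_measurable N"
  shows "fluctuation M N f g phi Y m k t \<in> borel_measurable P"
proof -
  have [measurable]: "LLR f g \<in> borel_measurable N"
    using f g unfolding LLR_def by measurable
  have "(\<lambda>\<omega>. if k \<in> phi s \<omega> then gap_weight M m k * (LLR f g (Y k s \<omega>) - llr_mean N f g m k) else 0)
      \<in> borel_measurable P" if s: "1 \<le> s" for s
  proof -
    have "phi s \<in> measurable (past_sigma M P Ru U N Y s) (count_space UNIV)"
      using adm s unfolding admissible_def by blast
    then have "phi s \<in> measurable P (count_space UNIV)"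
      by (rule measurable_from_subalg[OF search_model_past_subalgebra[OF SM]])
    then have [measurable]: "Measurable.pred P (\<lambda>\<omega>. k \<in> phi s \<omega>)"
      by (rule measurable_compose) simp
    have [measurable]: "Y k s \<in> measurable P N"
      using search_modelD(4)[OF SM k s] .
    show ?thesis by measurable
  qed
  then show ?thesis
    unfolding fluctuation_def by (intro borel_measurable_sum) simp
qed

lemma fluctuation_maximal_inequality:
  assumes SM: "search_model M m P N f g Ru U Y" and adm: "admissible M K P Ru U N Y phi"
    and k: "k < M" and f: "f \<in> borel_measurable N" "\<And>x. 0 \<le> f x"
    and g: "g \<in> borel_measurable N" "\<And>x. 0 \<le> g x"
    and mgf: "\<exists>\<delta>>0. \<forall>s. \<bar>s\<bar> < \<delta> \<longrightarrow>
           integrable N (\<lambda>x. f x * exp (s * LLR f g x)) \<and>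
           integrable N (\<lambda>x. g x * exp (s * LLR f g x))"
    and lam: "0 < lam"
  shows "measure P {\<omega> \<in> space P. \<exists>t\<in>{1..n}. lam \<le> fluctuation M N f g phi Y m k t \<omega>}
    \<le> real n * fluctuation_variance M N f g m k / lam\<^sup>2"
proof -
  obtain \<delta> where \<delta>: "0 < \<delta>" and \<delta>_mgf: "\<And>s. \<bar>s\<bar> < \<delta> \<Longrightarrow>
      integrable N (\<lambda>x. f x * exp (s * LLR f g x)) \<and> integrable N (\<lambda>x. g x * exp (s * LLR f g x))"
    using mgf by blast
  let ?h = "cell_density m f g k"
  have law: "distributed P N (Y k t) (\<lambda>x. ennreal (?h x))" if "1 \<le> t" for t
    using search_modelD(3)[OF SM k that] unfolding cell_density_def by (cases "k = m") simp_all
  have mgf_pos: "integrable N (\<lambda>x. ?h x * exp (\<delta> / 2 * LLR f g x))"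
    and mgf_neg: "integrable N (\<lambda>x. ?h x * exp (- (\<delta> / 2) * LLR f g x))"
    using \<delta>_mgf[of "\<delta> / 2"] \<delta>_mgf[of "- (\<delta> / 2)"] \<delta> by (auto simp: cell_density_def)
  have "?h x \<ge> 0" for x
    using f g by (simp add: cell_density_def)
  from cell_maximal_inequality[where c = "gap_weight M m k" and n = n,
      OF SM adm k law this f(1) g(1) _ mgf_pos mgf_neg lam] \<delta>
  show ?thesis
    unfolding fluctuation_def fluctuation_variance_def llr_mean_def by simp
qed

lemma exists_summand_ge_average:
  fixes h :: "'i \<Rightarrow> real"
  assumes "finite A" "A \<noteq> {}" and "x \<le> (\<Sum>a\<in>A. h a)"
  shows "\<exists>a\<in>A. x / real (card A) \<le> h a"
proof (rule ccontr)
  assume "\<not> ?thesis"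
  then have "(\<Sum>a\<in>A. h a) < (\<Sum>a\<in>A. x / real (card A))"
    using assms(1,2) by (intro sum_strict_mono) auto
  also have "\<dots> = x"
    using assms(1,2) by simp
  finally show False
    using assms(3) by simp
qed

lemma large_gap_has_large_fluctuation:
  assumes M: "2 \<le> M" "m < M" and adm: "admissible M K P Ru U N Y phi" and \<omega>: "\<omega> \<in> space P"
    and f: "\<And>x. 0 \<le> f x" and g: "\<And>x. 0 \<le> g x" and n: "1 \<le> n" and \<epsilon>: "0 < \<epsilon>"
    and I_nonneg: "0 \<le> Istar M K (KLD N g f) (KLD N f g)"
    and gap: "real n * (Istar M K (KLD N g f) (KLD N f g) + \<epsilon>)
      \<le> Max ((\<lambda>t. DeltaS M f g phi Y m t \<omega>) ` {1..n})"
  shows "\<exists>k<M. \<exists>t\<in>{1..n}. real n * \<epsilon> / real M \<le> fluctuation M N f g phi Y m k t \<omega>"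
proof -
  let ?I = "Istar M K (KLD N g f) (KLD N f g)"
  have M1: "1 \<le> real M - 1"
    using M by simp
  have "Max ((\<lambda>t. DeltaS M f g phi Y m t \<omega>) ` {1..n}) \<in> (\<lambda>t. DeltaS M f g phi Y m t \<omega>) ` {1..n}"
    using n by (intro Max_in) auto
  then obtain t where t: "t \<in> {1..n}"
    and max: "Max ((\<lambda>t. DeltaS M f g phi Y m t \<omega>) ` {1..n}) = DeltaS M f g phi Y m t \<omega>"
    by blast
  have "(real M - 1) * (real n * (?I + \<epsilon>)) \<le> (real M - 1) * DeltaS M f g phi Y m t \<omega>"
    using gap M1 unfolding max by (intro mult_left_mono) auto
  also have "\<dots> \<le> real t * ((real M - 1) * ?I) + (\<Sum>k<M. fluctuation M N f g phi Y m k t \<omega>)"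
    by (rule gap_le_drift_plus_fluctuation[OF M adm \<omega> f g])
  also have "real t * ((real M - 1) * ?I) \<le> real n * ((real M - 1) * ?I)"
    using t I_nonneg M1 by (intro mult_right_mono) auto
  finally have "(real M - 1) * (real n * \<epsilon>) \<le> (\<Sum>k<M. fluctuation M N f g phi Y m k t \<omega>)"
    by (simp add: algebra_simps)
  moreover have "real n * \<epsilon> \<le> (real M - 1) * (real n * \<epsilon>)"
    using mult_right_mono[OF M1, of "real n * \<epsilon>"] \<epsilon> by simp
  ultimately have "real n * \<epsilon> \<le> (\<Sum>k<M. fluctuation M N f g phi Y m k t \<omega>)"
    by linarith
  then show ?thesis
    using exists_summand_ge_average[of "{..<M}"] M t by fastforce
qed

text \<open>Union bound over the cells: the probability of a large gap is \<open>O(1/n)\<close>.\<close>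
lemma large_gap_probability:
  assumes M: "2 \<le> M" "m < M"
    and SM: "search_model M m P N f g Ru U Y" and adm: "admissible M K P Ru U N Y phi"
    and f: "f \<in> borel_measurable N" "\<And>x. 0 \<le> f x"
    and g: "g \<in> borel_measurable N" "\<And>x. 0 \<le> g x"
    and mgf: "\<exists>\<delta>>0. \<forall>s. \<bar>s\<bar> < \<delta> \<longrightarrow>
           integrable N (\<lambda>x. f x * exp (s * LLR f g x)) \<and>
           integrable N (\<lambda>x. g x * exp (s * LLR f g x))"
    and I_nonneg: "0 \<le> Istar M K (KLD N g f) (KLD N f g)"
    and n: "1 \<le> n" and \<epsilon>: "0 < \<epsilon>"
  shows "measure P {\<omega> \<in> space P.
      Max ((\<lambda>t. DeltaS M f g phi Y m t \<omega>) ` {1..n}) \<ge> real n * (Istar M K (KLD N g f) (KLD N f g) + \<epsilon>)}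
    \<le> (\<Sum>k<M. fluctuation_variance M N f g m k) * (real M / \<epsilon>)\<^sup>2 / real n"
proof -
  interpret prob_space P by (rule search_modelD(1)[OF SM])
  let ?lam = "real n * \<epsilon> / real M"
  define B where "B k = {\<omega> \<in> space P. \<exists>t\<in>{1..n}. ?lam \<le> fluctuation M N f g phi Y m k t \<omega>}" for k
  have lam: "0 < ?lam"
    using n \<epsilon> M by simp
  have B_events: "B k \<in> events" if "k < M" for k
  proof -
    have [measurable]: "fluctuation M N f g phi Y m k t \<in> borel_measurable P" for t
      using fluctuation_measurable[OF SM adm that f(1) g(1)] .
    show ?thesis unfolding B_def by measurable
  qed
  have "measure P {\<omega> \<in> space P.
      Max ((\<lambda>t. DeltaS M f g phi Y m t \<omega>) ` {1..n}) \<ge> real n * (Istar M K (KLD N g f) (KLD N f g) + \<epsilon>)}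
    \<le> measure P (\<Union>k<M. B k)"
    using large_gap_has_large_fluctuation[OF M adm _ f(2) g(2) n \<epsilon> I_nonneg] B_events
    by (intro finite_measure_mono) (fastforce simp: B_def)+
  also have "\<dots> \<le> (\<Sum>k<M. measure P (B k))"
    using B_events by (intro finite_measure_subadditive_finite) auto
  also have "\<dots> \<le> (\<Sum>k<M. real n * fluctuation_variance M N f g m k / ?lam\<^sup>2)"
    unfolding B_def
    by (intro sum_mono fluctuation_maximal_inequality[OF SM adm _ f g mgf lam]) simp
  also have "\<dots> = (\<Sum>k<M. fluctuation_variance M N f g m k * ((real M / \<epsilon>)\<^sup>2 / real n))"
    using n \<epsilon> M by (intro sum.cong refl) (simp add: field_simps power2_eq_square)
  also have "\<dots> = (\<Sum>k<M. fluctuation_variance M N f g m k) * (real M / \<epsilon>)\<^sup>2 / real n"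
    by (simp add: sum_distrib_right sum_divide_distrib)
  finally show ?thesis .
qed

theorem lemma4:
  fixes M K m :: nat and \<epsilon> :: real
    and N :: "'a measure" and f g :: "'a \<Rightarrow> real"
    and P :: "'w measure" and Ru :: "'u measure" and U :: "'w \<Rightarrow> 'u"
    and Y :: "nat \<Rightarrow> nat \<Rightarrow> 'w \<Rightarrow> 'a" and phi :: "nat \<Rightarrow> 'w \<Rightarrow> nat set"
  assumes "2 \<le> M" and "1 \<le> K" and "K \<le> M" and "m < M"
    and "f \<in> borel_measurable N" and "g \<in> borel_measurable N"
    and "\<And>x. 0 \<le> f x" and "\<And>x. 0 \<le> g x"
    and "(\<integral>\<^sup>+x. ennreal (f x) \<partial>N) = 1" and "(\<integral>\<^sup>+x. ennreal (g x) \<partial>N) = 1"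
    and "AE x in N. (f x = 0 \<longleftrightarrow> g x = 0)"
    and "integrable N (\<lambda>x. g x * ln (g x / f x))"
    and "integrable N (\<lambda>x. f x * ln (f x / g x))"
    and "0 < KLD N g f" and "0 < KLD N f g"
    and "\<exists>\<delta>>0. \<forall>s. \<bar>s\<bar> < \<delta> \<longrightarrow>
           integrable N (\<lambda>x. f x * exp (s * LLR f g x)) \<and>
           integrable N (\<lambda>x. g x * exp (s * LLR f g x))"
    and "search_model M m P N f g Ru U Y"
    and "admissible M K P Ru U N Y phi"
    and "0 < \<epsilon>"
  shows "(\<lambda>n. measure P {\<omega> \<in> space P.
            Max ((\<lambda>t. DeltaS M f g phi Y m t \<omega>) ` {1..n})
              \<ge> real n * (Istar M K (KLD N g f) (KLD N f g) + \<epsilon>)})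
         \<longlonglongrightarrow> 0"
proof (rule tendsto_sandwich[OF _ _ tendsto_const lim_const_over_n])
  have "0 \<le> Istar M K (KLD N g f) (KLD N f g)"
    using assms(1,14,15) by (intro Istar_nonneg) auto
  from large_gap_probability[OF assms(1,4,17,18,5,7,6,8,16) this _ assms(19)]
  show "\<forall>\<^sub>F n in sequentially. measure P {\<omega> \<in> space P.
            Max ((\<lambda>t. DeltaS M f g phi Y m t \<omega>) ` {1..n})
              \<ge> real n * (Istar M K (KLD N g f) (KLD N f g) + \<epsilon>)}
      \<le> (\<Sum>k<M. fluctuation_variance M N f g m k) * (real M / \<epsilon>)\<^sup>2 / real n"
    by (intro eventually_sequentiallyI[of 1]) simp
qed simp

end
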